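(* Let $\mathcal{L}$ be a language on the alphabet $\{a,b\}$ and let ${\rm S}:\mathcal{L}\to\mathbb{N}_0\times\mathbb{N}_0$ be a homomorphism. If $\{{\rm S}(a),{\rm S}(b)\}\neq\{(0,1),(1,0)\}$, then $(\mathbb{N}_0\times\mathbb{N}_0)\setminus{\rm S}(\mathcal{L})$ is infinite.
   Context: $\mathbb{N}_0=\{0,1,2,\dots\}$. A language on $\{a,b\}$ is a set of nonempty finite words over $\{a,b\}$ closed under concatenation (a sub-semigroup of the free semigroup on $\{a,b\}$). A homomorphism ${\rm S}:\mathcal{L}\to\mathbb{N}_0\times\mathbb{N}_0$ is a map with ${\rm S}(w_1\cdots w_n)={\rm S}(w_1)+\cdots+{\rm S}(w_n)$ (coordinatewise addition), determined by the vectors ${\rm S}(a),{\rm S}(b)$. *)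

theory Defs
  imports Main "HOL-Library.Product_Plus"
begin

datatype letter = a | b

definition is_language :: "letter list set \<Rightarrow> bool" where
  "is_language L \<longleftrightarrow> (\<forall>w\<in>L. w \<noteq> []) \<and> (\<forall>u\<in>L. \<forall>v\<in>L. u @ v \<in> L)"

definition hom :: "nat \<times> nat \<Rightarrow> nat \<times> nat \<Rightarrow> letter list \<Rightarrow> nat \<times> nat" where
  "hom Sa Sb w = sum_list (map (\<lambda>c. case c of a \<Rightarrow> Sa | b \<Rightarrow> Sb) w)"

lemma hom_append: "hom Sa Sb (u @ v) = hom Sa Sb u + hom Sa Sb v"
  by (simp add: hom_def)

lemma hom_letters: "hom Sa Sb [a] = Sa" "hom Sa Sb [b] = Sb"
  by (simp_all add: hom_def)

end

theory Submission
  imports Defs "HOL-Library.Infinite_Set"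
begin

text \<open>The image of any word under the homomorphism is i Sa + j Sb, with i and j the numbers
  of letters a and b, so it
  suffices that the complement of the monoid generated by two vectors of \<open>\<nat>\<^sup>2\<close> is infinite
  unless these are the unit vectors. If no generator lies on the positive x-axis, the whole
  positive x-axis is missed; symmetrically for the y-axis. Otherwise the generators are (c,0)
  and (0,d) with c,d > 0, and if, say, c \<ge> 2 then every (c n + 1, 0) is missed.\<close>

definition nat_cone :: "nat \<times> nat \<Rightarrow> nat \<times> nat \<Rightarrow> (nat \<times> nat) set" where
  "nat_cone u v = {(i * fst u + j * fst v, i * snd u + j * snd v) | i j. True}"

lemma hom_eq_count_list:
  "hom Sa Sb w = (count_list w a * fst Sa + count_list w b * fst Sb,
                  count_list w a * snd Sa + count_list w b * snd Sb)"
proof (induction w)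
  case Nil
  then show ?case by (simp add: hom_def zero_prod_def)
next
  case (Cons c w)
  have "hom Sa Sb (c # w) = hom Sa Sb [c] + hom Sa Sb w"
    using hom_append[of Sa Sb "[c]" w] by simp
  with Cons show ?case by (cases c) (auto simp: hom_letters plus_prod_def)
qed

lemma hom_in_nat_cone: "hom Sa Sb w \<in> nat_cone Sa Sb"
  unfolding nat_cone_def hom_eq_count_list by blast

lemma nat_cone_commute: "nat_cone u v = nat_cone v u"
  unfolding nat_cone_def by (smt (verit) Collect_cong add.commute)

lemma swap_image_nat_cone: "prod.swap ` nat_cone u v = nat_cone (prod.swap u) (prod.swap v)"
  unfolding nat_cone_def by force

lemma infinite_Compl_nat_cone_swap:
  assumes "infinite (- nat_cone (prod.swap u) (prod.swap v))"
  shows "infinite (- nat_cone u v)"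
proof -
  have "- nat_cone (prod.swap u) (prod.swap v) = prod.swap ` (- nat_cone u v)"
    by (simp add: swap_image_nat_cone[symmetric] bij_image_Compl_eq)
  with assms show ?thesis by auto
qed

lemma x_axis_in_nat_cone:
  assumes "(n, 0) \<in> nat_cone u v" and "0 < n"
  shows "snd u = 0 \<and> 0 < fst u \<or> snd v = 0 \<and> 0 < fst v"
  using assms unfolding nat_cone_def by auto

lemma x_axis_in_nat_cone_of_axes:
  assumes "(n, 0) \<in> nat_cone (c, 0) (0, d)" and "0 < d"
  shows "c dvd n"
  using assms unfolding nat_cone_def by auto

lemma infinite_Compl_nat_cone_no_x_generator:
  assumes "\<not> (snd u = 0 \<and> 0 < fst u)" and "\<not> (snd v = 0 \<and> 0 < fst v)"
  shows "infinite (- nat_cone u v)"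
proof -
  have "range (\<lambda>n. (Suc n, 0)) \<subseteq> - nat_cone u v"
    using x_axis_in_nat_cone assms by blast
  moreover have "infinite (range (\<lambda>n. (Suc n, 0::nat)))"
    by (rule range_inj_infinite) (simp add: inj_def)
  ultimately show ?thesis
    by (rule infinite_super)
qed

lemma infinite_Compl_nat_cone_of_axes:
  assumes "2 \<le> c" and "0 < d"
  shows "infinite (- nat_cone (c, 0) (0, d))"
proof -
  have "\<not> c dvd c * n + 1" for n
  proof
    assume "c dvd c * n + 1"
    then have "c dvd 1"
      using dvd_add_right_iff[of c "c * n" 1] by simp
    with assms show False
      by simp
  qed
  then have "range (\<lambda>n. (c * n + 1, 0)) \<subseteq> - nat_cone (c, 0) (0, d)"
    using x_axis_in_nat_cone_of_axes \<open>0 < d\<close> by blast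
  moreover have "infinite (range (\<lambda>n. (c * n + 1, 0::nat)))"
    by (rule range_inj_infinite) (use assms in \<open>simp add: inj_def\<close>)
  ultimately show ?thesis
    by (rule infinite_super)
qed

lemma axis_generators_cases:
  fixes u v :: "nat \<times> nat"
  obtains (no_x_generator) "\<not> (snd u = 0 \<and> 0 < fst u)" "\<not> (snd v = 0 \<and> 0 < fst v)"
    | (no_y_generator) "\<not> (fst u = 0 \<and> 0 < snd u)" "\<not> (fst v = 0 \<and> 0 < snd v)"
    | (axes) c d where "0 < c" "0 < d" "{u, v} = {(c, 0), (0, d)}"
proof (cases "snd u = 0 \<and> 0 < fst u \<and> fst v = 0 \<and> 0 < snd v")
  case True
  then show thesis
    by (intro that(3)[of "fst u" "snd v"]) (auto simp: prod_eq_iff)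
next
  case not_u_x_v_y: False
  show thesis
  proof (cases "snd v = 0 \<and> 0 < fst v \<and> fst u = 0 \<and> 0 < snd u")
    case True
    then show thesis
      by (intro that(3)[of "fst v" "snd u"]) (auto simp: prod_eq_iff insert_commute)
  next
    case False
    with not_u_x_v_y that(1,2) show thesis
      by linarith
  qed
qed

lemma infinite_Compl_nat_cone:
  assumes "{u, v} \<noteq> {(0, 1), (1, 0)}"
  shows "infinite (- nat_cone u v)"
proof (cases rule: axis_generators_cases[of u v])
  case no_x_generator
  then show ?thesis
    by (rule infinite_Compl_nat_cone_no_x_generator)
next
  case no_y_generator
  then show ?thesis
    by (intro infinite_Compl_nat_cone_swap[OF infinite_Compl_nat_cone_no_x_generator]) simp_all
next
  case (axes c d)
  then have cone: "nat_cone u v = nat_cone (c, 0) (0, d)"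
    using nat_cone_commute unfolding doubleton_eq_iff by metis
  have "\<not> (c = 1 \<and> d = 1)"
    using assms axes by (auto simp: insert_commute)
  with axes have "2 \<le> c \<or> 2 \<le> d"
    by linarith
  then show ?thesis
  proof
    assume "2 \<le> c"
    then show ?thesis
      using cone infinite_Compl_nat_cone_of_axes axes by simp
  next
    assume "2 \<le> d"
    then have "infinite (- nat_cone (d, 0) (0, c))"
      using infinite_Compl_nat_cone_of_axes axes by simp
    then have "infinite (- nat_cone (prod.swap (c, 0)) (prod.swap (0, d)))"
      by (simp add: nat_cone_commute)
    with cone show ?thesis
      using infinite_Compl_nat_cone_swap by simp
  qed
qed

theorem proposition9:
  fixes L :: "letter list set" and Sa Sb :: "nat \<times> nat"
  assumes "is_language L"
    and "{Sa, Sb} \<noteq> {(0, 1), (1, 0)}"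
  shows "infinite (UNIV - hom Sa Sb ` L)"
proof -
  have "- nat_cone Sa Sb \<subseteq> UNIV - hom Sa Sb ` L"
    using hom_in_nat_cone by blast
  with infinite_Compl_nat_cone[OF assms(2)] show ?thesis
    using infinite_super by blast
qed

end
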